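(* Let $G$ be a strong $(\ell,d)$-graph with strong $(\ell,d)$-partitions $\pi$ and $\pi'$. Then $p(\pi)=p(\pi')$.
   Context: For a graph $G$ and $U,W\subseteq V(G)$, $\Delta(U,W)=\max\{|N(u)\cap W|,|N(x)\cap U|:u\in U,x\in W\}$ and $\overline\Delta(U,W)$ is defined the same way with $\overline N(v)=V(G)\setminus(N(v)\cup\{v\})$ replacing $N(v)$. A partition $\{V_1,\dots,V_{\ell'}\}$ of $V(G)$ is an $(\ell,d)$-partition if $\ell'\le\ell$ and for each pair of not necessarily distinct $i,j$, $V_i$ is $d$-sparse with respect to $V_j$ ($\Delta(V_i,V_j)\le d$) or $d$-dense with respect to $V_j$ ($\overline\Delta(V_i,V_j)\le d$). It is strong if each bag has at least $5\cdot2^\ell d$ vertices; $G$ is a strong $(\ell,d)$-graph if it has a strong $(\ell,d)$-partition. For a strong $(\ell,d)$-partition $\pi$, define $V_i\sim V_j$ iff for every bag $V_k$, either $V_k$ is $d$-dense with respect to both $V_i$ and $V_j$, or $d$-sparse with respect to both; $p(\pi)$ is the partition of $V(G)$ whose parts are the unions of the bags in each $\sim$-equivalence class. *)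

theory Defs
  imports Main
begin

definition simple_graph :: "'a set \<Rightarrow> ('a \<Rightarrow> 'a \<Rightarrow> bool) \<Rightarrow> bool" where
  "simple_graph V E \<longleftrightarrow> finite V \<and> (\<forall>u v. E u v \<longrightarrow> u \<in> V \<and> v \<in> V)
     \<and> (\<forall>u v. E u v \<longrightarrow> E v u) \<and> (\<forall>v. \<not> E v v)"

definition nbhd :: "'a set \<Rightarrow> ('a \<Rightarrow> 'a \<Rightarrow> bool) \<Rightarrow> 'a \<Rightarrow> 'a set" where
  "nbhd V E v = {u \<in> V. E v u}"

definition conbhd :: "'a set \<Rightarrow> ('a \<Rightarrow> 'a \<Rightarrow> bool) \<Rightarrow> 'a \<Rightarrow> 'a set" where
  "conbhd V E v = V - (nbhd V E v \<union> {v})"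

definition Delta :: "'a set \<Rightarrow> ('a \<Rightarrow> 'a \<Rightarrow> bool) \<Rightarrow> 'a set \<Rightarrow> 'a set \<Rightarrow> nat" where
  "Delta V E U W = Max ((\<lambda>u. card (nbhd V E u \<inter> W)) ` U \<union> (\<lambda>x. card (nbhd V E x \<inter> U)) ` W)"

definition coDelta :: "'a set \<Rightarrow> ('a \<Rightarrow> 'a \<Rightarrow> bool) \<Rightarrow> 'a set \<Rightarrow> 'a set \<Rightarrow> nat" where
  "coDelta V E U W = Max ((\<lambda>u. card (conbhd V E u \<inter> W)) ` U \<union> (\<lambda>x. card (conbhd V E x \<inter> U)) ` W)"

definition sparse :: "'a set \<Rightarrow> ('a \<Rightarrow> 'a \<Rightarrow> bool) \<Rightarrow> nat \<Rightarrow> 'a set \<Rightarrow> 'a set \<Rightarrow> bool" where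
  "sparse V E d U W \<longleftrightarrow> Delta V E U W \<le> d"

definition dense :: "'a set \<Rightarrow> ('a \<Rightarrow> 'a \<Rightarrow> bool) \<Rightarrow> nat \<Rightarrow> 'a set \<Rightarrow> 'a set \<Rightarrow> bool" where
  "dense V E d U W \<longleftrightarrow> coDelta V E U W \<le> d"

definition is_partition :: "'a set \<Rightarrow> 'a set set \<Rightarrow> bool" where
  "is_partition V P \<longleftrightarrow> \<Union>P = V \<and> {} \<notin> P \<and>
     (\<forall>A\<in>P. \<forall>B\<in>P. A \<noteq> B \<longrightarrow> A \<inter> B = {})"

definition ld_partition :: "'a set \<Rightarrow> ('a \<Rightarrow> 'a \<Rightarrow> bool) \<Rightarrow> nat \<Rightarrow> nat \<Rightarrow> 'a set set \<Rightarrow> bool" where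
  "ld_partition V E l d P \<longleftrightarrow> is_partition V P \<and> card P \<le> l \<and>
     (\<forall>A\<in>P. \<forall>B\<in>P. sparse V E d A B \<or> dense V E d A B)"

definition strong_ld_partition :: "'a set \<Rightarrow> ('a \<Rightarrow> 'a \<Rightarrow> bool) \<Rightarrow> nat \<Rightarrow> nat \<Rightarrow> 'a set set \<Rightarrow> bool" where
  "strong_ld_partition V E l d P \<longleftrightarrow> ld_partition V E l d P \<and>
     (\<forall>A\<in>P. card A \<ge> 5 * 2 ^ l * d)"

definition strong_ld_graph :: "'a set \<Rightarrow> ('a \<Rightarrow> 'a \<Rightarrow> bool) \<Rightarrow> nat \<Rightarrow> nat \<Rightarrow> bool" where
  "strong_ld_graph V E l d \<longleftrightarrow> (\<exists>P. strong_ld_partition V E l d P)"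

definition bag_equiv :: "'a set \<Rightarrow> ('a \<Rightarrow> 'a \<Rightarrow> bool) \<Rightarrow> nat \<Rightarrow> 'a set set \<Rightarrow> 'a set \<Rightarrow> 'a set \<Rightarrow> bool" where
  "bag_equiv V E d P A B \<longleftrightarrow> (\<forall>C\<in>P. (dense V E d C A \<and> dense V E d C B) \<or>
                                      (sparse V E d C A \<and> sparse V E d C B))"

text \<open>p(P): unions of the bags in each ~-equivalence class.\<close>
definition coarsening :: "'a set \<Rightarrow> ('a \<Rightarrow> 'a \<Rightarrow> bool) \<Rightarrow> nat \<Rightarrow> 'a set set \<Rightarrow> 'a set set" where
  "coarsening V E d P = (\<lambda>A. \<Union>{B \<in> P. bag_equiv V E d P A B}) ` P"

end

theory Submission
  imports Defs
begin

text \<open>Vertices in the same class of \<open>p(\<pi>)\<close> have similar neighbourhoods: every bag is sparse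
  to both bags or dense to both, so in each of the at most \<open>\<ell>\<close> bags the two neighbourhoods differ
  in at most \<open>2d\<close> vertices, \<open>2d\<ell>\<close> in total. Vertices in different classes are separated by a bag
  \<open>C\<close> dense to one bag and sparse to the other, so their neighbourhoods differ on almost all of
  \<open>C\<close>, which for \<open>d > 0\<close> has more than \<open>2d\<ell> + 2d + 2\<close> vertices. Hence each class of \<open>p(\<pi>)\<close> is the set of
  vertices whose neighbourhood differs from that of a fixed vertex in at most \<open>2d\<ell>\<close> vertices,
  a description not referring to \<open>\<pi>\<close>.\<close>

definition distinguishing :: "'a set \<Rightarrow> ('a \<Rightarrow> 'a \<Rightarrow> bool) \<Rightarrow> 'a \<Rightarrow> 'a \<Rightarrow> 'a set" where
  "distinguishing V E u v = {w \<in> V. w \<noteq> u \<and> w \<noteq> v \<and> E u w \<noteq> E v w}"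

lemma distinguishing_commute: "distinguishing V E u v = distinguishing V E v u"
  unfolding distinguishing_def by blast

lemma distinguishing_subset_nbhd: "distinguishing V E u v \<subseteq> nbhd V E u \<union> nbhd V E v"
  unfolding distinguishing_def nbhd_def by auto

lemma distinguishing_subset_conbhd: "distinguishing V E u v \<subseteq> conbhd V E u \<union> conbhd V E v"
  unfolding distinguishing_def conbhd_def nbhd_def by auto

lemma diff_pair_subset_distinguishing:
  assumes "X \<subseteq> V"
  shows "X - {u, v} \<subseteq> distinguishing V E u v \<union> conbhd V E u \<union> nbhd V E v"
  using assms unfolding distinguishing_def conbhd_def nbhd_def by auto

lemma card_inter_le_if_subset_Un:
  assumes "finite Y" "finite Z" "X \<subseteq> Y \<union> Z" "card (Y \<inter> C) \<le> k" "card (Z \<inter> C) \<le> k"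
  shows "card (X \<inter> C) \<le> 2 * k"
proof -
  have "card (X \<inter> C) \<le> card ((Y \<inter> C) \<union> (Z \<inter> C))"
    using assms(1-3) by (intro card_mono) auto
  also have "\<dots> \<le> card (Y \<inter> C) + card (Z \<inter> C)"
    by (rule card_Un_le)
  finally show ?thesis
    using assms(4,5) by linarith
qed

lemma sparse_singleton_self:
  assumes "simple_graph V E"
  shows "sparse V E d {v} {v}"
proof -
  have "nbhd V E v \<inter> {v} = {}"
    using assms unfolding simple_graph_def nbhd_def by auto
  then show ?thesis
    unfolding sparse_def Delta_def by simp
qed

lemma dense_singleton_self: "dense V E d {v} {v}"
proof -
  have "conbhd V E v \<inter> {v} = {}"
    unfolding conbhd_def by auto
  then show ?thesis
    unfolding dense_def coDelta_def by simp
qed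

locale ld_partitioned_graph =
  fixes V :: "'a set" and E :: "'a \<Rightarrow> 'a \<Rightarrow> bool" and l d :: nat and P :: "'a set set"
  assumes simple: "simple_graph V E"
    and ld: "ld_partition V E l d P"
begin

lemma finite_vertices: "finite V"
  using simple unfolding simple_graph_def by blast

lemma bag_subset: "A \<in> P \<Longrightarrow> A \<subseteq> V"
  using ld unfolding ld_partition_def is_partition_def by blast

lemma finite_bag: "A \<in> P \<Longrightarrow> finite A"
  using bag_subset finite_vertices finite_subset by blast

lemma bag_nonempty: "A \<in> P \<Longrightarrow> A \<noteq> {}"
  using ld unfolding ld_partition_def is_partition_def by blast

lemma bag_eqI: "A \<in> P \<Longrightarrow> B \<in> P \<Longrightarrow> x \<in> A \<Longrightarrow> x \<in> B \<Longrightarrow> A = B"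
  using ld unfolding ld_partition_def is_partition_def by blast

lemma bag_exists: "v \<in> V \<Longrightarrow> \<exists>A\<in>P. v \<in> A"
  using ld unfolding ld_partition_def is_partition_def by blast

lemma finite_bags: "finite P"
  using ld finite_vertices finite_UnionD unfolding ld_partition_def is_partition_def by metis

lemma card_bags_le: "card P \<le> l"
  using ld unfolding ld_partition_def by blast

lemma sparse_or_dense: "A \<in> P \<Longrightarrow> B \<in> P \<Longrightarrow> sparse V E d A B \<or> dense V E d A B"
  using ld unfolding ld_partition_def by blast

lemma card_nbhd_le_if_sparse:
  assumes "sparse V E d C A" "C \<in> P" "A \<in> P" "a \<in> A"
  shows "card (nbhd V E a \<inter> C) \<le> d"
proof -
  have "card (nbhd V E a \<inter> C) \<le> Delta V E C A"
    unfolding Delta_def using assms(2-4) finite_bag by (intro Max_ge) auto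
  then show ?thesis
    using assms(1) unfolding sparse_def by linarith
qed

lemma card_conbhd_le_if_dense:
  assumes "dense V E d C A" "C \<in> P" "A \<in> P" "a \<in> A"
  shows "card (conbhd V E a \<inter> C) \<le> d"
proof -
  have "card (conbhd V E a \<inter> C) \<le> coDelta V E C A"
    unfolding coDelta_def using assms(2-4) finite_bag by (intro Max_ge) auto
  then show ?thesis
    using assms(1) unfolding dense_def by linarith
qed

lemma card_distinguishing_inter_le:
  assumes "(dense V E d C A \<and> dense V E d C B) \<or> (sparse V E d C A \<and> sparse V E d C B)"
    and "C \<in> P" "A \<in> P" "B \<in> P" "a \<in> A" "b \<in> B"
  shows "card (distinguishing V E a b \<inter> C) \<le> 2 * d"
  using assms(1)
proof
  assume "dense V E d C A \<and> dense V E d C B"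
  then show ?thesis
    using assms(2-6) finite_vertices
    by (intro card_inter_le_if_subset_Un[OF _ _ distinguishing_subset_conbhd]
        card_conbhd_le_if_dense) (auto simp: conbhd_def)
next
  assume "sparse V E d C A \<and> sparse V E d C B"
  then show ?thesis
    using assms(2-6) finite_vertices
    by (intro card_inter_le_if_subset_Un[OF _ _ distinguishing_subset_nbhd]
        card_nbhd_le_if_sparse) (auto simp: nbhd_def)
qed

lemma card_distinguishing_le_if_bag_equiv:
  assumes "bag_equiv V E d P A B" "A \<in> P" "B \<in> P" "a \<in> A" "b \<in> B"
  shows "card (distinguishing V E a b) \<le> 2 * d * l"
proof -
  let ?S = "distinguishing V E a b"
  have cover: "(\<Union>C\<in>P. ?S \<inter> C) = ?S"
    using bag_exists unfolding distinguishing_def by blast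
  have "card ?S \<le> (\<Sum>C\<in>P. card (?S \<inter> C))"
    using card_UN_le[OF finite_bags, of "\<lambda>C. ?S \<inter> C"] unfolding cover .
  also have "\<dots> \<le> (\<Sum>C\<in>P. 2 * d)"
  proof (rule sum_mono)
    fix C
    assume "C \<in> P"
    then have "(dense V E d C A \<and> dense V E d C B) \<or> (sparse V E d C A \<and> sparse V E d C B)"
      using assms(1) unfolding bag_equiv_def by blast
    then show "card (?S \<inter> C) \<le> 2 * d"
      using card_distinguishing_inter_le \<open>C \<in> P\<close> assms(2-5) by blast
  qed
  also have "\<dots> \<le> 2 * d * l"
    using card_bags_le by (simp add: mult.commute)
  finally show ?thesis .
qed

lemma card_bag_diff_pair_le:
  assumes "dense V E d C A" "sparse V E d C B" "C \<in> P" "A \<in> P" "B \<in> P" "a \<in> A" "b \<in> B"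
  shows "card (C - {a, b}) \<le> card (distinguishing V E a b) + 2 * d"
proof -
  let ?S = "distinguishing V E a b"
  have "C - {a, b} \<subseteq> ?S \<union> (conbhd V E a \<inter> C) \<union> (nbhd V E b \<inter> C)"
    using diff_pair_subset_distinguishing[OF bag_subset[OF assms(3)]] by blast
  then have "card (C - {a, b}) \<le> card (?S \<union> (conbhd V E a \<inter> C) \<union> (nbhd V E b \<inter> C))"
    using finite_vertices by (intro card_mono) (auto simp: distinguishing_def conbhd_def nbhd_def)
  also have "\<dots> \<le> card (?S \<union> (conbhd V E a \<inter> C)) + card (nbhd V E b \<inter> C)"
    by (rule card_Un_le)
  also have "\<dots> \<le> card ?S + card (conbhd V E a \<inter> C) + card (nbhd V E b \<inter> C)"
    using card_Un_le[of ?S "conbhd V E a \<inter> C"] by linarith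
  also have "\<dots> \<le> card ?S + 2 * d"
    using card_conbhd_le_if_dense[OF assms(1,3,4,6)] card_nbhd_le_if_sparse[OF assms(2,3,5,7)]
    by linarith
  finally show ?thesis .
qed

text \<open>A bag inside \<open>{a, b}\<close> is \<open>A\<close> or \<open>B\<close>, and then a singleton, hence both sparse and dense to
  itself; this excludes tiny bags even when \<open>d = 0\<close> makes the size bound vacuous.\<close>
lemma bag_not_subset_pair:
  assumes "dense V E d C A" "\<not> sparse V E d C A" "sparse V E d C B" "\<not> dense V E d C B"
    and "C \<in> P" "A \<in> P" "B \<in> P" "a \<in> A" "b \<in> B"
  shows "\<not> C \<subseteq> {a, b}"
proof
  assume C_sub: "C \<subseteq> {a, b}"
  have "A \<noteq> B"
    using assms(1,4) by blast
  then have "a \<notin> B" "b \<notin> A"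
    using bag_eqI assms(6-9) by blast+
  consider "a \<in> C" | "b \<in> C"
    using C_sub bag_nonempty[OF assms(5)] by blast
  then show False
  proof cases
    case 1
    then have "C = A"
      using bag_eqI assms(5,6,8) by blast
    with C_sub \<open>b \<notin> A\<close> assms(8) have "C = {a}" and "A = {a}"
      by blast+
    then show False
      using assms(2) sparse_singleton_self[OF simple, of d a] by simp
  next
    case 2
    then have "C = B"
      using bag_eqI assms(5,7,9) by blast
    with C_sub \<open>a \<notin> B\<close> assms(9) have "C = {b}" and "B = {b}"
      by blast+
    then show False
      using assms(4) dense_singleton_self[of V E d b] by simp
  qed
qed

end

locale strong_ld_partitioned_graph = ld_partitioned_graph +
  assumes bags_large: "A \<in> P \<Longrightarrow> 5 * 2 ^ l * d \<le> card A"
begin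

lemma card_bag_diff_pair_gt:
  assumes "dense V E d C A" "\<not> sparse V E d C A" "sparse V E d C B" "\<not> dense V E d C B"
    and "C \<in> P" "A \<in> P" "B \<in> P" "a \<in> A" "b \<in> B"
  shows "2 * d * l + 2 * d < card (C - {a, b})"
proof (cases "d = 0")
  case True
  have "C - {a, b} \<noteq> {}"
    using bag_not_subset_pair[OF assms] by blast
  then show ?thesis
    using True finite_bag[OF assms(5)] by (simp add: card_gt_0_iff)
next
  case False
  have "card {a, b} \<le> 2"
    by (simp add: card_insert_if)
  then have "card C - 2 \<le> card (C - {a, b})"
    using diff_card_le_card_Diff[of "{a, b}" C] by simp
  moreover have "5 * (l + 1) * d \<le> 5 * 2 ^ l * d"
    using less_exp[of l] by (intro mult_le_mono) (auto simp: Suc_le_eq)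
  then have "5 * (l + 1) * d \<le> card C"
    using bags_large[OF assms(5)] by linarith
  ultimately show ?thesis
    using False by (simp add: algebra_simps)
qed

lemma card_distinguishing_gt_if_separated:
  assumes "dense V E d C A" "\<not> sparse V E d C A" "sparse V E d C B" "\<not> dense V E d C B"
    and "C \<in> P" "A \<in> P" "B \<in> P" "a \<in> A" "b \<in> B"
  shows "2 * d * l < card (distinguishing V E a b)"
  using card_bag_diff_pair_gt[OF assms] card_bag_diff_pair_le[OF assms(1,3,5-9)] by linarith

lemma card_distinguishing_gt_if_not_bag_equiv:
  assumes "\<not> bag_equiv V E d P A B" "A \<in> P" "B \<in> P" "a \<in> A" "b \<in> B"
  shows "2 * d * l < card (distinguishing V E a b)"
proof -
  obtain C where C: "C \<in> P"
    and "\<not> (dense V E d C A \<and> dense V E d C B)" "\<not> (sparse V E d C A \<and> sparse V E d C B)"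
    using assms(1) unfolding bag_equiv_def by blast
  then consider
    "dense V E d C A" "\<not> sparse V E d C A" "sparse V E d C B" "\<not> dense V E d C B" |
    "dense V E d C B" "\<not> sparse V E d C B" "sparse V E d C A" "\<not> dense V E d C A"
    using sparse_or_dense[OF C assms(2)] sparse_or_dense[OF C assms(3)] by blast
  then show ?thesis
  proof cases
    case 1
    then show ?thesis
      by (rule card_distinguishing_gt_if_separated[OF _ _ _ _ C assms(2-5)])
  next
    case 2
    then have "2 * d * l < card (distinguishing V E b a)"
      by (rule card_distinguishing_gt_if_separated[OF _ _ _ _ C assms(3,2,5,4)])
    then show ?thesis
      by (simp add: distinguishing_commute)
  qed
qed

lemma bag_class_eq_ball:
  assumes "A \<in> P" "a \<in> A"
  shows "\<Union>{B \<in> P. bag_equiv V E d P A B} = {u \<in> V. card (distinguishing V E a u) \<le> 2 * d * l}"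
proof (intro equalityI subsetI)
  fix u
  assume "u \<in> \<Union>{B \<in> P. bag_equiv V E d P A B}"
  then obtain B where B: "B \<in> P" "bag_equiv V E d P A B" "u \<in> B"
    by blast
  then have "card (distinguishing V E a u) \<le> 2 * d * l"
    using card_distinguishing_le_if_bag_equiv assms by blast
  then show "u \<in> {u \<in> V. card (distinguishing V E a u) \<le> 2 * d * l}"
    using bag_subset[OF B(1)] B(3) by blast
next
  fix u
  assume u: "u \<in> {u \<in> V. card (distinguishing V E a u) \<le> 2 * d * l}"
  then obtain B where B: "B \<in> P" "u \<in> B"
    using bag_exists by blast
  have "bag_equiv V E d P A B"
  proof (rule ccontr)
    assume "\<not> bag_equiv V E d P A B"
    then have "2 * d * l < card (distinguishing V E a u)"
      using card_distinguishing_gt_if_not_bag_equiv assms B by blast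
    with u show False
      by simp
  qed
  with B show "u \<in> \<Union>{B \<in> P. bag_equiv V E d P A B}"
    by blast
qed

lemma coarsening_eq_balls:
  "coarsening V E d P = (\<lambda>a. {u \<in> V. card (distinguishing V E a u) \<le> 2 * d * l}) ` V"
proof (intro equalityI subsetI)
  fix X
  assume "X \<in> coarsening V E d P"
  then obtain A where A: "A \<in> P" and X: "X = \<Union>{B \<in> P. bag_equiv V E d P A B}"
    unfolding coarsening_def by blast
  obtain a where "a \<in> A"
    using bag_nonempty[OF A] by blast
  then show "X \<in> (\<lambda>a. {u \<in> V. card (distinguishing V E a u) \<le> 2 * d * l}) ` V"
    using bag_class_eq_ball[OF A] X bag_subset[OF A] by blast
next
  fix X
  assume "X \<in> (\<lambda>a. {u \<in> V. card (distinguishing V E a u) \<le> 2 * d * l}) ` V"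
  then obtain a where "a \<in> V" and X: "X = {u \<in> V. card (distinguishing V E a u) \<le> 2 * d * l}"
    by blast
  then obtain A where "A \<in> P" "a \<in> A"
    using bag_exists by blast
  then show "X \<in> coarsening V E d P"
    using bag_class_eq_ball X unfolding coarsening_def by blast
qed

end

lemma strong_ld_partitioned_graphI:
  assumes "simple_graph V E" "strong_ld_partition V E l d P"
  shows "strong_ld_partitioned_graph V E l d P"
  using assms unfolding strong_ld_partition_def
  by unfold_locales auto

theorem theorem2p6:
  fixes V :: "'a set" and E :: "'a \<Rightarrow> 'a \<Rightarrow> bool" and l d :: nat
    and P P' :: "'a set set"
  assumes "simple_graph V E"
    and "strong_ld_partition V E l d P"
    and "strong_ld_partition V E l d P'"
  shows "coarsening V E d P = coarsening V E d P'"
proof -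
  interpret \<pi>: strong_ld_partitioned_graph V E l d P
    using strong_ld_partitioned_graphI assms(1,2) .
  interpret \<pi>': strong_ld_partitioned_graph V E l d P'
    using strong_ld_partitioned_graphI assms(1,3) .
  show ?thesis
    using \<pi>.coarsening_eq_balls \<pi>'.coarsening_eq_balls by simp
qed

end
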